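(* The class of context-free languages is not closed under ${\rm bdir}$; for instance, for the context-free language $L=\{0^{2m}1^{4m}2^n3^n : m,n\ge1\}$, ${\rm bdir}(L)\cap(03)^+(13)^+(22)^+=\{(03)^{2m}(13)^{4m}(22)^{3m}:m\ge1\}$, so ${\rm bdir}(L)$ is not context-free.
   Context: For $w=a_1\cdots a_{2n}$ of even length, ${\rm bdir}(w)=a_1a_{2n}a_2a_{2n-1}\cdots a_na_{n+1}$; for $w=a_1\cdots a_{2n+1}$ of odd length, ${\rm bdir}(w)=a_1a_{2n+1}a_2a_{2n}\cdots a_na_{n+2}a_{n+1}$. ${\rm bdir}(L)=\{{\rm bdir}(w):w\in L\}$. *)

theory Defs
  imports Main
begin

datatype ('n, 't) sym = NT 'n | Tm 't

definition derive1 :: "('n \<times> ('n, 't) sym list) set \<Rightarrow> ('n, 't) sym list \<Rightarrow> ('n, 't) sym list \<Rightarrow> bool" where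
  "derive1 P u v \<longleftrightarrow> (\<exists>l A r \<alpha>. u = l @ [NT A] @ r \<and> (A, \<alpha>) \<in> P \<and> v = l @ \<alpha> @ r)"

definition Lang :: "('n \<times> ('n, 't) sym list) set \<Rightarrow> 'n \<Rightarrow> 't list set" where
  "Lang P S = {w. (derive1 P)\<^sup>*\<^sup>* [NT S] (map Tm w)}"

(* a language is context-free iff it is generated by a finite context-free grammar;
   nonterminals are taken from nat, which is w.l.o.g. for finite grammars *)
definition CFL :: "'t list set \<Rightarrow> bool" where
  "CFL L \<longleftrightarrow> (\<exists>(P :: (nat \<times> (nat, 't) sym list) set) S. finite P \<and> L = Lang P S)"

(* bdir(a_1 ... a_k) = a_1 a_k a_2 a_{k-1} ...: position i (0-based) takes w!(i div 2) for even i,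
   and w!(k-1-i div 2) for odd i *)
definition bdir :: "'a list \<Rightarrow> 'a list" where
  "bdir w = map (\<lambda>i. if even i then w ! (i div 2) else w ! (length w - 1 - i div 2)) [0..<length w]"

definition wpow :: "'a list \<Rightarrow> nat \<Rightarrow> 'a list" where
  "wpow u n = concat (replicate n u)"

end

theory Submission
  imports Defs "HOL-Combinatorics.Permutations"
begin

(* L is generated by S -> X Y, X -> 00 X 1111 | 001111, Y -> 2 Y 3 | 23.  Since bdir only permutes
   the letters of a word, letter counts show that bdir(L) meets R = (03)^+(13)^+(22)^+ exactly in the
   words (03)^2m (13)^4m (22)^3m = bdir(0^2m 1^4m 2^6m 3^6m).

   Non-context-freeness of bdir(L) uses a pumping lemma relativised to a finite automaton: parse-tree
   nodes are labelled with their nonterminal and the automaton states before and after their yield,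
   and two nested nodes with equal labels allow cutting out a pump without leaving the language or
   changing the final state.  The automaton used accepts all of R and only words with #0 + #1 = #3.
   Deleting a pump inside a window of length at most K < m from (03)^2m (13)^4m (22)^3m therefore
   yields the image of some 0^2m' 1^4m' 2^6m' 3^6m' with m' < m, so the deleted letters include a 0
   (all before position 4m) and a 2 (all after position 12m), which a window of length < 8m cannot. *)

section \<open>Parse trees and contexts\<close>

datatype ('n, 't) tree = Leaf 't | Node 'n "('n, 't) tree list"

fun root :: "('n, 't) tree \<Rightarrow> ('n, 't) sym" where
  "root (Leaf a) = Tm a"
| "root (Node A ts) = NT A"

fun yield :: "('n, 't) tree \<Rightarrow> 't list" where
  "yield (Leaf a) = [a]"
| "yield (Node A ts) = concat (map yield ts)"

fun parse_tree :: "('n \<times> ('n, 't) sym list) set \<Rightarrow> ('n, 't) tree \<Rightarrow> bool" where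
  "parse_tree P (Leaf a) = True"
| "parse_tree P (Node A ts) = ((A, map root ts) \<in> P \<and> (\<forall>t \<in> set ts. parse_tree P t))"

fun height :: "('n, 't) tree \<Rightarrow> nat" where
  "height (Leaf a) = 0"
| "height (Node A ts) = Suc (foldr max (map height ts) 0)"

text \<open>A context is the path from the root of a tree down to a hole: each step records the
  node label and the siblings to the left and right of the path.\<close>
type_synonym ('n, 't) ctxt = "('n \<times> ('n, 't) tree list \<times> ('n, 't) tree list) list"

fun plug :: "('n, 't) ctxt \<Rightarrow> ('n, 't) tree \<Rightarrow> ('n, 't) tree" where
  "plug [] s = s"
| "plug ((A, ls, rs) # c) s = Node A (ls @ plug c s # rs)"

fun lyield :: "('n, 't) ctxt \<Rightarrow> 't list" where
  "lyield [] = []"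
| "lyield ((A, ls, rs) # c) = concat (map yield ls) @ lyield c"

fun ryield :: "('n, 't) ctxt \<Rightarrow> 't list" where
  "ryield [] = []"
| "ryield ((A, ls, rs) # c) = ryield c @ concat (map yield rs)"

lemma yield_plug: "yield (plug c s) = lyield c @ yield s @ ryield c"
  by (induction c rule: lyield.induct) auto

lemma plug_append: "plug (c @ d) s = plug c (plug d s)"
  by (induction c rule: lyield.induct) auto

lemma lyield_append: "lyield (c @ d) = lyield c @ lyield d"
  by (induction c rule: lyield.induct) auto

lemma parse_tree_plug: "parse_tree P (plug c s) \<Longrightarrow> parse_tree P s"
  by (induction c rule: lyield.induct) auto

lemma root_plug: "c \<noteq> [] \<Longrightarrow> root (plug c s) = root (plug c s')"
  by (cases c) auto

lemma parse_tree_plug_replace: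
  "parse_tree P (plug c s) \<Longrightarrow> parse_tree P s' \<Longrightarrow> root s' = root s \<Longrightarrow> parse_tree P (plug c s')"
proof (induction c rule: lyield.induct)
  case (2 A ls rs c)
  then show ?case by (cases c) auto
qed auto

text \<open>Size bookkeeping, used to choose parse trees of minimal size.\<close>
lemma size_plug_mono: "size s' < size s \<Longrightarrow> size (plug c s') < size (plug c s)"
  by (induction c rule: lyield.induct) auto

lemma size_plug_less: "c \<noteq> [] \<Longrightarrow> size s < size (plug c s)"
proof (induction c rule: lyield.induct)
  case (2 A ls rs c)
  then show ?case by (cases c) auto
qed auto

lemma foldr_max_ge: "x \<in> set xs \<Longrightarrow> x \<le> foldr max xs (0::nat)"
  by (induction xs) auto

lemma foldr_max_le: "\<forall>x \<in> set xs. x \<le> k \<Longrightarrow> foldr max xs (0::nat) \<le> k"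
  by (induction xs) auto

lemma foldr_max_witness: "0 < h \<Longrightarrow> h \<le> foldr max xs (0::nat) \<Longrightarrow> \<exists>x \<in> set xs. h \<le> x"
  by (induction xs) (auto simp: le_max_iff_disj)

lemma height_plug: "height s \<le> height (plug c s)"
proof (induction c rule: lyield.induct)
  case (2 A ls rs c)
  then show ?case using foldr_max_ge[of "height (plug c s)" "map height (ls @ plug c s # rs)"] by simp
qed simp

lemma subtree_of_height:
  "Suc h \<le> height t \<Longrightarrow> \<exists>c t1. t = plug c t1 \<and> height t1 = Suc h"
proof (induction t)
  case (Node A ts)
  show ?case
  proof (cases "height (Node A ts) = Suc h")
    case True
    then show ?thesis by (intro exI[of _ "[]"]) auto
  next
    case False
    with Node.prems have "Suc h \<le> foldr max (map height ts) 0" by simp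
    then obtain ch where ch: "ch \<in> set ts" "Suc h \<le> height ch"
      using foldr_max_witness[of "Suc h" "map height ts"] by auto
    then obtain c t1 where "ch = plug c t1" "height t1 = Suc h" using Node.IH by blast
    moreover obtain ls rs where "ts = ls @ ch # rs" using split_list[OF ch(1)] by blast
    ultimately show ?thesis by (intro exI[of _ "(A, ls, rs) # c"]) auto
  qed
qed simp

lemma length_yield_le:
  assumes "\<forall>(A, \<alpha>) \<in> P. length \<alpha> \<le> b" "1 \<le> b"
  shows "parse_tree P t \<Longrightarrow> length (yield t) \<le> b ^ height t"
proof (induction t)
  case (Node A ts)
  let ?h = "foldr max (map height ts) 0"
  have "length (yield ch) \<le> b ^ ?h" if "ch \<in> set ts" for ch
  proof -
    have "length (yield ch) \<le> b ^ height ch" using Node that by auto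
    also have "\<dots> \<le> b ^ ?h" using that assms(2) by (intro power_increasing foldr_max_ge) auto
    finally show ?thesis .
  qed
  then have "length (yield (Node A ts)) \<le> length ts * b ^ ?h"
    using sum_list_mono[of ts "\<lambda>x. length (yield x)" "\<lambda>_. b ^ ?h"]
    by (simp add: length_concat sum_list_triv o_def)
  also have "length ts \<le> b" using Node.prems assms(1) by fastforce
  then have "length ts * b ^ ?h \<le> b * b ^ ?h" by simp
  finally show ?case by simp
qed simp

section \<open>Parse trees versus derivations\<close>

lemma derive1_context: "derive1 P u v \<Longrightarrow> derive1 P (l @ u @ r) (l @ v @ r)"
proof -
  assume "derive1 P u v"
  then obtain l' A r' \<alpha> where "u = l' @ [NT A] @ r'" "(A, \<alpha>) \<in> P" "v = l' @ \<alpha> @ r'"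
    unfolding derive1_def by blast
  then show ?thesis unfolding derive1_def
    by (intro exI[of _ "l @ l'"] exI[of _ A] exI[of _ "r' @ r"] exI[of _ \<alpha>]) simp
qed

lemma derives_context: "(derive1 P)\<^sup>*\<^sup>* u v \<Longrightarrow> (derive1 P)\<^sup>*\<^sup>* (l @ u @ r) (l @ v @ r)"
proof (induction rule: rtranclp_induct)
  case (step v v')
  then show ?case by (meson derive1_context rtranclp.rtrancl_into_rtrancl)
qed simp

lemma forest_derives:
  "\<forall>t \<in> set ts. (derive1 P)\<^sup>*\<^sup>* [root t] (map Tm (yield t)) \<Longrightarrow>
   (derive1 P)\<^sup>*\<^sup>* (map root ts) (map Tm (concat (map yield ts)))"
proof (induction ts)
  case (Cons t ts)
  have "(derive1 P)\<^sup>*\<^sup>* ([root t] @ map root ts) (map Tm (yield t) @ map root ts)"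
    using Cons.prems derives_context[of P "[root t]" "map Tm (yield t)" "[]" "map root ts"] by simp
  also have "(derive1 P)\<^sup>*\<^sup>* \<dots> (map Tm (yield t) @ map Tm (concat (map yield ts)))"
    using Cons derives_context[of P "map root ts" _ "map Tm (yield t)" "[]"] by simp
  finally show ?case by simp
qed simp

lemma parse_tree_derives: "parse_tree P t \<Longrightarrow> (derive1 P)\<^sup>*\<^sup>* [root t] (map Tm (yield t))"
proof (induction t)
  case (Node A ts)
  have "derive1 P [NT A] (map root ts)"
    unfolding derive1_def using Node.prems by (intro exI[of _ "[]"]) auto
  moreover have "(derive1 P)\<^sup>*\<^sup>* (map root ts) (map Tm (concat (map yield ts)))"
    using Node by (intro forest_derives) auto
  ultimately show ?case by (simp add: converse_rtranclp_into_rtranclp)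
qed simp

lemma derives_forest:
  "(derive1 P)\<^sup>*\<^sup>* \<alpha> \<beta> \<Longrightarrow> \<beta> = map Tm w \<Longrightarrow>
   \<exists>ts. (\<forall>t \<in> set ts. parse_tree P t) \<and> map root ts = \<alpha> \<and> concat (map yield ts) = w"
proof (induction rule: converse_rtranclp_induct)
  case base
  then show ?case by (intro exI[of _ "map Leaf w"]) (auto simp: o_def)
next
  case (step \<alpha> \<alpha>')
  then obtain ts where ts: "\<forall>t \<in> set ts. parse_tree P t" "map root ts = \<alpha>'" "concat (map yield ts) = w"
    by blast
  from step(1) obtain l A r \<gamma> where d: "\<alpha> = l @ [NT A] @ r" "(A, \<gamma>) \<in> P" "\<alpha>' = l @ \<gamma> @ r"
    unfolding derive1_def by blast
  from ts(2) d(3) have "map root ts = l @ \<gamma> @ r" by simp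
  then obtain ts1 ts23 where 1: "ts = ts1 @ ts23" "l = map root ts1" "\<gamma> @ r = map root ts23"
    using map_eq_append_conv[THEN iffD1] by blast
  then obtain ts2 ts3 where 2: "ts23 = ts2 @ ts3" "\<gamma> = map root ts2" "r = map root ts3"
    using map_eq_append_conv[THEN iffD1, OF sym] by blast
  show ?case using ts d 1 2
    by (intro exI[of _ "ts1 @ [Node A ts2] @ ts3"]) auto
qed

lemma Lang_parse_tree: "w \<in> Lang P S \<longleftrightarrow> (\<exists>t. parse_tree P t \<and> root t = NT S \<and> yield t = w)"
proof
  assume "w \<in> Lang P S"
  then have "(derive1 P)\<^sup>*\<^sup>* [NT S] (map Tm w)" unfolding Lang_def by simp
  from derives_forest[OF this refl] obtain ts
    where ts: "(\<forall>t \<in> set ts. parse_tree P t) \<and> map root ts = [NT S] \<and> concat (map yield ts) = w"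
    by (rule exE)
  then obtain t where "ts = [t]" by (cases ts) auto
  with ts show "\<exists>t. parse_tree P t \<and> root t = NT S \<and> yield t = w" by auto
next
  assume "\<exists>t. parse_tree P t \<and> root t = NT S \<and> yield t = w"
  then obtain t where "parse_tree P t" "root t = NT S" "yield t = w" by blast
  then show "w \<in> Lang P S" unfolding Lang_def using parse_tree_derives[of P t] by simp
qed

section \<open>A pumping lemma relative to a finite automaton\<close>

definition occ_label :: "('s \<Rightarrow> 't \<Rightarrow> 's) \<Rightarrow> 's \<Rightarrow> ('n, 't) ctxt \<Rightarrow> ('n, 't) tree \<Rightarrow> ('n, 't) sym \<times> 's \<times> 's"
  where "occ_label \<delta> q c s = (root s, foldl \<delta> q (lyield c), foldl \<delta> q (lyield c @ yield s))"

definition labels :: "('s \<Rightarrow> 't \<Rightarrow> 's) \<Rightarrow> 's \<Rightarrow> ('n, 't) tree \<Rightarrow> (('n, 't) sym \<times> 's \<times> 's) set"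
  where "labels \<delta> q t = {occ_label \<delta> q c s | c s. t = plug c s \<and> (\<exists>A ts. s = Node A ts)}"

definition repeated :: "('s \<Rightarrow> 't \<Rightarrow> 's) \<Rightarrow> 's \<Rightarrow> ('n, 't) tree \<Rightarrow> bool"
  where "repeated \<delta> q t \<longleftrightarrow> (\<exists>c1 c2 s. c2 \<noteq> [] \<and> t = plug c1 (plug c2 s) \<and>
            occ_label \<delta> q c1 (plug c2 s) = occ_label \<delta> q (c1 @ c2) s)"

lemma occ_label_append: "occ_label \<delta> q (c @ d) s = occ_label \<delta> (foldl \<delta> q (lyield c)) d s"
  by (simp add: occ_label_def lyield_append)

lemma labels_subset: "parse_tree P t \<Longrightarrow> labels \<delta> q t \<subseteq> NT ` fst ` P \<times> UNIV"
proof
  fix x assume "parse_tree P t" "x \<in> labels \<delta> q t"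
  then obtain c A ts where x: "x = occ_label \<delta> q c (Node A ts)" "parse_tree P (Node A ts)"
    unfolding labels_def using parse_tree_plug by blast
  then have "A \<in> fst ` P" by force
  then show "x \<in> NT ` fst ` P \<times> UNIV" using x(1) by (simp add: occ_label_def)
qed

lemma card_labels_le:
  fixes \<delta> :: "'s::finite \<Rightarrow> 't \<Rightarrow> 's" and P :: "('n \<times> ('n, 't) sym list) set"
  assumes "finite P" "parse_tree P t"
  shows "finite (labels \<delta> q t)"
    and "card (labels \<delta> q t) \<le> card (fst ` P) * card (UNIV :: ('s \<times> 's) set)"
proof -
  have fin: "finite (NT ` fst ` P \<times> (UNIV :: ('s \<times> 's) set))" using assms(1) by simp
  have sub: "labels \<delta> q t \<subseteq> NT ` fst ` P \<times> UNIV" using labels_subset[OF assms(2)] .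
  show "finite (labels \<delta> q t)" using finite_subset[OF sub fin] .
  show "card (labels \<delta> q t) \<le> card (fst ` P) * card (UNIV :: ('s \<times> 's) set)"
    using card_mono[OF fin sub] by (simp add: card_cartesian_product card_image inj_on_def)
qed

context
  fixes \<delta> :: "'s \<Rightarrow> 't \<Rightarrow> 's" and q :: 's and A :: 'n and ls rs :: "('n, 't) tree list"
    and ch :: "('n, 't) tree"
begin

text \<open>Occurrences inside a child correspond to occurrences in its parent, read with the
  automaton state reached after the siblings to its left.\<close>
abbreviation q_ch :: 's where "q_ch \<equiv> foldl \<delta> q (concat (map yield ls))"

lemma occ_label_child: "occ_label \<delta> q ((A, ls, rs) # c) s = occ_label \<delta> q_ch c s"
  using occ_label_append[of \<delta> q "[(A, ls, rs)]" c s] by simp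

lemma labels_child: "labels \<delta> q_ch ch \<subseteq> labels \<delta> q (Node A (ls @ ch # rs))"
proof
  fix x assume "x \<in> labels \<delta> q_ch ch"
  then obtain c s where "x = occ_label \<delta> q_ch c s" "ch = plug c s" "\<exists>B ts. s = Node B ts"
    unfolding labels_def by blast
  then show "x \<in> labels \<delta> q (Node A (ls @ ch # rs))"
    unfolding labels_def using occ_label_child
    by (intro CollectI exI[of _ "(A, ls, rs) # c"] exI[of _ s]) auto
qed

lemma repeated_child: "repeated \<delta> q_ch ch \<Longrightarrow> repeated \<delta> q (Node A (ls @ ch # rs))"
proof -
  assume "repeated \<delta> q_ch ch"
  then obtain c1 c2 s where "c2 \<noteq> []" "ch = plug c1 (plug c2 s)"
      "occ_label \<delta> q_ch c1 (plug c2 s) = occ_label \<delta> q_ch (c1 @ c2) s"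
    unfolding repeated_def by blast
  then show ?thesis unfolding repeated_def using occ_label_child
    by (intro exI[of _ "(A, ls, rs) # c1"] exI[of _ c2] exI[of _ s]) auto
qed

lemma repeated_top:
  assumes "occ_label \<delta> q [] (Node A (ls @ ch # rs)) \<in> labels \<delta> q_ch ch"
  shows "repeated \<delta> q (Node A (ls @ ch # rs))"
proof -
  obtain c s where cs: "occ_label \<delta> q [] (Node A (ls @ ch # rs)) = occ_label \<delta> q_ch c s" "ch = plug c s"
    using assms unfolding labels_def by blast
  have "occ_label \<delta> q_ch c s = occ_label \<delta> q ([] @ (A, ls, rs) # c) s"
    using occ_label_child by simp
  with cs show ?thesis unfolding repeated_def
    by (intro exI[of _ "[]"] exI[of _ "(A, ls, rs) # c"] exI[of _ s]) auto
qed

end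

text \<open>Without a repeated label, every root-to-leaf path carries pairwise distinct labels,
  so the height is bounded by the number of labels.\<close>
lemma height_le_card_labels:
  fixes \<delta> :: "'s::finite \<Rightarrow> 't \<Rightarrow> 's"
  assumes "finite P"
  shows "parse_tree P t \<Longrightarrow> \<not> repeated \<delta> q t \<Longrightarrow> height t \<le> card (labels \<delta> q t)"
proof (induction t arbitrary: q)
  case (Node A ts)
  let ?L = "labels \<delta> q (Node A ts)"
  have top: "occ_label \<delta> q [] (Node A ts) \<in> ?L" unfolding labels_def by force
  have "height ch < card ?L" if ch_in: "ch \<in> set ts" for ch
  proof -
    obtain ls rs where ts: "ts = ls @ ch # rs" using split_list[OF ch_in] by blast
    let ?q = "foldl \<delta> q (concat (map yield ls))"
    have ch: "parse_tree P ch" "\<not> repeated \<delta> ?q ch"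
      using Node.prems ch_in repeated_child[of \<delta> q ls ch A rs] ts by auto
    have "labels \<delta> ?q ch \<subset> ?L"
      using labels_child[of \<delta> q ls ch A rs] repeated_top[of \<delta> q A ls ch rs] top Node.prems(2) ts
      by auto
    then have "card (labels \<delta> ?q ch) < card ?L"
      using card_labels_le(1)[OF assms Node.prems(1)] by (rule psubset_card_mono[rotated])
    moreover have "height ch \<le> card (labels \<delta> ?q ch)" using Node.IH[OF ch_in ch] .
    ultimately show ?thesis by simp
  qed
  then have "foldr max (map height ts) 0 \<le> card ?L - 1"
    by (intro foldr_max_le) fastforce
  moreover have "0 < card ?L"
    using top card_labels_le(1)[OF assms Node.prems(1)] card_gt_0_iff by blast
  ultimately show ?case by simp
qed simp

lemma small_repetition:
  fixes \<delta> :: "'s::finite \<Rightarrow> 't \<Rightarrow> 's" and P :: "('n \<times> ('n, 't) sym list) set"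
  assumes "finite P" "parse_tree P t" "H \<le> height t"
    and H: "H = Suc (card (fst ` P) * card (UNIV :: ('s \<times> 's) set))"
  obtains c c2 s where "t = plug c (plug c2 s)" "c2 \<noteq> []" "height (plug c2 s) \<le> H"
    "occ_label \<delta> q c (plug c2 s) = occ_label \<delta> q (c @ c2) s"
proof -
  obtain c0 t1 where t1: "t = plug c0 t1" "height t1 = H"
    using subtree_of_height assms(3) unfolding H by blast
  let ?p = "foldl \<delta> q (lyield c0)"
  have "parse_tree P t1" using assms(2) t1(1) parse_tree_plug by blast
  then have "repeated \<delta> ?p t1"
    using height_le_card_labels[OF assms(1)] card_labels_le(2)[OF assms(1), of t1 \<delta> ?p] t1(2)
    unfolding H by fastforce
  then obtain c1 c2 s where c2: "c2 \<noteq> []" "t1 = plug c1 (plug c2 s)"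
      "occ_label \<delta> ?p c1 (plug c2 s) = occ_label \<delta> ?p (c1 @ c2) s"
    unfolding repeated_def by blast
  have "height (plug c2 s) \<le> H" using height_plug[of "plug c2 s" c1] c2(2) t1(2) by simp
  with c2 t1(1) show thesis
    by (intro that[of "c0 @ c1" c2 s]) (simp_all add: plug_append occ_label_append)
qed

lemma foldl_skip:
  assumes "foldl \<delta> q u = foldl \<delta> q (u @ v)" "foldl \<delta> q (u @ v @ x @ y) = foldl \<delta> q (u @ v @ x)"
  shows "foldl \<delta> q (u @ x @ w) = foldl \<delta> q (u @ v @ x @ y @ w)"
proof -
  have "foldl \<delta> q (u @ x) = foldl \<delta> q (u @ v @ x)" using assms(1) by simp
  also have "\<dots> = foldl \<delta> q (u @ v @ x @ y)" using assms(2) by simp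
  finally show ?thesis by (metis append.assoc foldl_append)
qed

lemma cut_repetition:
  assumes t: "t = plug c (plug c2 s)" and P: "parse_tree P t"
    and lab: "occ_label \<delta> q c (plug c2 s) = occ_label \<delta> q (c @ c2) s"
  shows "parse_tree P (plug c s)" "root (plug c s) = root t"
    and "foldl \<delta> q (yield (plug c s)) = foldl \<delta> q (yield t)"
proof -
  have root: "root (plug c2 s) = root s" and states:
      "foldl \<delta> q (lyield c) = foldl \<delta> q (lyield c @ lyield c2)"
      "foldl \<delta> q (lyield c @ lyield c2 @ yield s @ ryield c2) = foldl \<delta> q (lyield c @ lyield c2 @ yield s)"
    using lab unfolding occ_label_def by (simp_all only: prod.inject lyield_append yield_plug append.assoc)
  show "parse_tree P (plug c s)"
    using parse_tree_plug_replace[of P c "plug c2 s" s] parse_tree_plug[of P c2 s]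
      parse_tree_plug[of P c "plug c2 s"] P t root by simp
  show "root (plug c s) = root t"
    using t root root_plug by (cases "c = []") auto
  show "foldl \<delta> q (yield (plug c s)) = foldl \<delta> q (yield t)"
    using foldl_skip[OF states] t by (simp add: yield_plug)
qed

lemma production_length_bound:
  assumes "finite P" shows "\<exists>b \<ge> 2. \<forall>(A, \<alpha>) \<in> P. length \<alpha> \<le> b"
proof -
  have "length \<alpha> \<le> 2 + (\<Sum>p\<in>P. length (snd p))" if "(A, \<alpha>) \<in> P" for A \<alpha>
    using member_le_sum[of "(A, \<alpha>)" P "\<lambda>p. length (snd p)"] that assms by simp
  then show ?thesis by (intro exI[of _ "2 + (\<Sum>p\<in>P. length (snd p))"]) auto
qed

text \<open>This makes the intersection with the regular language of the automaton available
  without constructing a product grammar.\<close>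
lemma pumping_with_automaton:
  fixes P :: "('n \<times> ('n, 't) sym list) set" and \<delta> :: "'s::finite \<Rightarrow> 't \<Rightarrow> 's"
  assumes "finite P"
  shows "\<exists>K. \<forall>z. z \<in> Lang P S \<longrightarrow> foldl \<delta> q0 z = qf \<longrightarrow> K \<le> length z \<longrightarrow>
    (\<exists>u v x y w. z = u @ v @ x @ y @ w \<and> v @ y \<noteq> [] \<and> length (v @ x @ y) \<le> K \<and>
        u @ x @ w \<in> Lang P S \<and> foldl \<delta> q0 (u @ x @ w) = qf)"
proof -
  obtain b where b: "2 \<le> b" "\<forall>(A, \<alpha>) \<in> P. length \<alpha> \<le> b"
    using production_length_bound[OF assms] by blast
  define H where "H = Suc (card (fst ` P) * card (UNIV :: ('s \<times> 's) set))"
  show ?thesis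
  proof (intro exI[of _ "b ^ H"] allI impI)
    fix z assume z: "z \<in> Lang P S" "foldl \<delta> q0 z = qf" "b ^ H \<le> length z"
    let ?parses = "\<lambda>t. parse_tree P t \<and> root t = NT S \<and> yield t = z"
    obtain t where t: "?parses t" and t_min: "\<And>t'. ?parses t' \<Longrightarrow> size t \<le> size t'"
      using ex_has_least_nat[of ?parses _ size] z(1) Lang_parse_tree by metis
    have "H \<le> height t"
    proof (rule ccontr)
      assume "\<not> H \<le> height t"
      then have "length z \<le> b ^ height t" "b ^ height t < b ^ H"
        using length_yield_le[OF b(2)] t b(1) by auto
      then show False using z(3) by simp
    qed
    then obtain c c2 s where rep: "t = plug c (plug c2 s)" "c2 \<noteq> []" "height (plug c2 s) \<le> H"
        "occ_label \<delta> q0 c (plug c2 s) = occ_label \<delta> q0 (c @ c2) s"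
      using small_repetition[OF assms, of t H \<delta>] t H_def by blast
    let ?t' = "plug c s"
    have t': "parse_tree P ?t'" "root ?t' = NT S" "foldl \<delta> q0 (yield ?t') = qf"
      using cut_repetition[OF rep(1) _ rep(4)] t z(2) by auto
    define u v x y w where "u = lyield c" "v = lyield c2" "x = yield s" "y = ryield c2" "w = ryield c"
    note defs = this
    have z_split: "z = u @ v @ x @ y @ w" and t'_yield: "yield ?t' = u @ x @ w"
      using t rep(1) by (simp_all add: defs yield_plug)
    have "length (v @ x @ y) \<le> b ^ height (plug c2 s)"
      using length_yield_le[OF b(2)] b(1) t rep(1) parse_tree_plug by (fastforce simp: defs yield_plug)
    also have "\<dots> \<le> b ^ H" using rep(3) b(1) by (intro power_increasing) auto
    finally have short: "length (v @ x @ y) \<le> b ^ H" .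
    have "size ?t' < size t" using rep(1,2) by (simp add: size_plug_mono size_plug_less)
    then have "v @ y \<noteq> []" using t_min[of ?t'] t'(1,2) z_split t'_yield by auto
    moreover have "u @ x @ w \<in> Lang P S" using t'(1,2) t'_yield unfolding Lang_parse_tree by blast
    ultimately show "\<exists>u v x y w. z = u @ v @ x @ y @ w \<and> v @ y \<noteq> [] \<and> length (v @ x @ y) \<le> b ^ H \<and>
        u @ x @ w \<in> Lang P S \<and> foldl \<delta> q0 (u @ x @ w) = qf"
      using z_split short t'(3) t'_yield by metis
  qed
qed

lemma wpow_Suc: "wpow u (Suc n) = u @ wpow u n"
  by (simp add: wpow_def)

lemma wpow_append_base: "wpow u n @ u = u @ wpow u n"
  by (induction n) (simp_all add: wpow_Suc wpow_def[of _ 0])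

lemma wpow_replicate: "wpow (replicate p a) n = replicate (p * n) a"
  by (induction n) (simp_all add: wpow_Suc wpow_def[of _ 0] replicate_add)

lemma count_list_replicate: "count_list (replicate n b) a = (if b = a then n else 0)"
  by (induction n) auto

lemma count_list_wpow: "count_list (wpow u n) a = n * count_list u a"
  by (induction n) (simp_all add: wpow_Suc wpow_def[of _ 0])

lemma nth_wpow: "p < n * length u \<Longrightarrow> wpow u n ! p = u ! (p mod length u)"
proof (induction n arbitrary: p)
  case (Suc n)
  then show ?case by (cases "p < length u") (auto simp: wpow_Suc nth_append le_mod_geq)
qed simp

lemma length_wpow: "length (wpow u n) = n * length u"
  by (induction n) (simp_all add: wpow_Suc wpow_def[of _ 0])

lemma foldl_wpow: "foldl \<delta> q u = q \<Longrightarrow> foldl \<delta> q (wpow u n) = q"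
  by (induction n) (simp_all add: wpow_Suc wpow_def[of _ 0])

lemma map_root_Tm: "map root ts = map Tm w \<Longrightarrow> ts = map Leaf w"
proof (induction ts arbitrary: w)
  case (Cons t ts)
  then show ?case by (cases w; cases t) auto
qed simp

lemma map_root_one_NT:
  assumes "map root ts = map Tm \<alpha> @ [NT A] @ map Tm \<beta>"
  obtains t where "ts = map Leaf \<alpha> @ [t] @ map Leaf \<beta>" "root t = NT A"
proof -
  obtain ts1 ts2 where 1: "ts = ts1 @ ts2" "map Tm \<alpha> = map root ts1" "[NT A] @ map Tm \<beta> = map root ts2"
    using map_eq_append_conv[THEN iffD1, OF assms] by blast
  then obtain t ts3 where "ts2 = t # ts3" "root t = NT A" "map root ts3 = map Tm \<beta>"
    by (cases ts2) auto
  with 1 show thesis using map_root_Tm[of ts1 \<alpha>] map_root_Tm[of ts3 \<beta>] that by auto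
qed

lemma yield_map_Leaf [simp]: "concat (map (yield \<circ> Leaf) w) = w"
  by (induction w) auto

lemma Lang_concat:
  assumes "{\<gamma>. (S, \<gamma>) \<in> P} = {[NT A, NT B]}"
  shows "Lang P S = {u @ v | u v. u \<in> Lang P A \<and> v \<in> Lang P B}"
proof (intro set_eqI iffI)
  fix w assume "w \<in> Lang P S"
  then obtain t where t: "parse_tree P t" "root t = NT S" "yield t = w"
    unfolding Lang_parse_tree by blast
  then obtain ts where ts: "parse_tree P (Node S ts)" "yield (Node S ts) = w"
    by (cases t) auto
  then have "map root ts = [NT A, NT B]" using assms by auto
  then obtain t1 t2 where "ts = [t1, t2]" "root t1 = NT A" "root t2 = NT B"
    by (auto simp: map_eq_Cons_conv)
  with ts show "w \<in> {u @ v | u v. u \<in> Lang P A \<and> v \<in> Lang P B}"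
    unfolding Lang_parse_tree by auto
next
  fix w assume "w \<in> {u @ v | u v. u \<in> Lang P A \<and> v \<in> Lang P B}"
  then obtain t1 t2 where "parse_tree P t1" "root t1 = NT A" "parse_tree P t2" "root t2 = NT B"
      "w = yield t1 @ yield t2"
    unfolding Lang_parse_tree by blast
  moreover have "(S, [NT A, NT B]) \<in> P" using assms by auto
  ultimately show "w \<in> Lang P S" unfolding Lang_parse_tree
    by (intro exI[of _ "Node S [t1, t2]"]) auto
qed

lemma Lang_linear:
  assumes prods: "{\<gamma>. (A, \<gamma>) \<in> P} = {map Tm \<alpha> @ [NT A] @ map Tm \<beta>, map Tm (\<alpha> @ \<beta>)}"
  shows "Lang P A = {wpow \<alpha> k @ wpow \<beta> k | k. 1 \<le> k}"
proof (intro set_eqI iffI)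
  have "\<exists>k \<ge> 1. yield t = wpow \<alpha> k @ wpow \<beta> k" if "parse_tree P t" "root t = NT A" for t
    using that
  proof (induction t)
    case (Node B ts)
    then have ts: "map root ts \<in> {map Tm \<alpha> @ [NT A] @ map Tm \<beta>, map Tm (\<alpha> @ \<beta>)}"
      using prods by auto
    show ?case
    proof (cases "map root ts = map Tm (\<alpha> @ \<beta>)")
      case True
      then have "ts = map Leaf (\<alpha> @ \<beta>)" by (rule map_root_Tm)
      then show ?thesis by (intro exI[of _ 1]) (simp add: wpow_def)
    next
      case False
      with ts have "map root ts = map Tm \<alpha> @ [NT A] @ map Tm \<beta>" by simp
      then obtain t where t: "ts = map Leaf \<alpha> @ [t] @ map Leaf \<beta>" "root t = NT A"
        by (rule map_root_one_NT)
      moreover have "parse_tree P t" using Node.prems(1) t(1) by simp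
      ultimately obtain k where "1 \<le> k" "yield t = wpow \<alpha> k @ wpow \<beta> k"
        using Node.IH[of t] t(1) by auto
      with t show ?thesis
        by (intro exI[of _ "Suc k"]) (simp add: wpow_Suc wpow_append_base)
    qed
  qed simp
  then show "w \<in> {wpow \<alpha> k @ wpow \<beta> k | k. 1 \<le> k}" if "w \<in> Lang P A" for w
    using that unfolding Lang_parse_tree by blast
next
  have step: "(A, map Tm \<alpha> @ [NT A] @ map Tm \<beta>) \<in> P" and base: "(A, map Tm (\<alpha> @ \<beta>)) \<in> P"
    using prods by blast+
  have "\<exists>t. parse_tree P t \<and> root t = NT A \<and> yield t = wpow \<alpha> (Suc k) @ wpow \<beta> (Suc k)" for k
  proof (induction k)
    case 0
    show ?case using base
      by (intro exI[of _ "Node A (map Leaf (\<alpha> @ \<beta>))"]) (simp add: wpow_def o_def ball_Un)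
  next
    case (Suc k)
    then obtain t where "parse_tree P t" "root t = NT A" "yield t = wpow \<alpha> (Suc k) @ wpow \<beta> (Suc k)"
      by blast
    with step show ?case
      by (intro exI[of _ "Node A (map Leaf \<alpha> @ [t] @ map Leaf \<beta>)"])
        (simp add: o_def ball_Un wpow_Suc[of _ "Suc k"] wpow_append_base)
  qed
  then show "w \<in> Lang P A" if "w \<in> {wpow \<alpha> k @ wpow \<beta> k | k. 1 \<le> k}" for w
    using that unfolding Lang_parse_tree by (auto dest!: Suc_le_D)
qed

section \<open>The language \<open>L\<close> is context-free\<close>

abbreviation Lword :: "nat \<Rightarrow> nat \<Rightarrow> nat list" where
  "Lword m n \<equiv> replicate (2 * m) 0 @ replicate (4 * m) 1 @ replicate n 2 @ replicate n 3"

abbreviation Rword :: "nat \<Rightarrow> nat \<Rightarrow> nat \<Rightarrow> nat list" where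
  "Rword i j k \<equiv> wpow [0, 3] i @ wpow [1, 3] j @ wpow [2, 2] k"

definition exampleL :: "nat list set" where
  "exampleL = {Lword m n | m n. m \<ge> 1 \<and> n \<ge> 1}"

text \<open>The grammar \<open>S \<rightarrow> X Y\<close>, \<open>X \<rightarrow> 00X1111 | 001111\<close>, \<open>Y \<rightarrow> 2Y3 | 23\<close>
  with \<open>S, X, Y\<close> numbered \<open>0, 1, 2\<close>.\<close>
definition G :: "(nat \<times> (nat, nat) sym list) set" where
  "G = {(0, [NT 1, NT 2]),
        (1, map Tm (replicate 2 0) @ [NT 1] @ map Tm (replicate 4 1)),
        (1, map Tm (replicate 2 0 @ replicate 4 1)),
        (2, map Tm (replicate 1 2) @ [NT 2] @ map Tm (replicate 1 3)),
        (2, map Tm (replicate 1 2 @ replicate 1 3))}"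

lemma Lang_G_0: "Lang G 0 = exampleL"
proof -
  have "Lang G 1 = {wpow (replicate 2 0) k @ wpow (replicate 4 1) k | k. 1 \<le> k}"
    by (rule Lang_linear) (auto simp: G_def)
  moreover have "Lang G 2 = {wpow (replicate 1 2) k @ wpow (replicate 1 3) k | k. 1 \<le> k}"
    by (rule Lang_linear) (auto simp: G_def)
  moreover have "Lang G 0 = {u @ v | u v. u \<in> Lang G 1 \<and> v \<in> Lang G 2}"
    by (rule Lang_concat) (auto simp: G_def)
  ultimately show ?thesis unfolding exampleL_def wpow_replicate
    by auto (blast, metis append.assoc)
qed

lemma CFL_exampleL: "CFL exampleL"
  unfolding CFL_def using Lang_G_0 by (intro exI[of _ G] exI[of _ 0]) (simp add: G_def)

section \<open>\<open>bdir\<close> permutes letters; the intersection with \<open>(03)\<^sup>+(13)\<^sup>+(22)\<^sup>+\<close>\<close>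

definition mirror :: "nat \<Rightarrow> nat \<Rightarrow> nat" where
  "mirror n i = (if i < n then if even i then i div 2 else n - 1 - i div 2 else i)"

lemma bdir_permute_list: "bdir w = permute_list (mirror (length w)) w"
  unfolding bdir_def permute_list_def mirror_def by (intro map_cong) auto

lemma mirror_even_odd_distinct:
  fixes i j n :: nat
  assumes "even i" "odd j" "i < n" "j < n"
  shows "i div 2 \<noteq> n - 1 - j div 2"
proof -
  obtain a b where "i = 2 * a" "j = 2 * b + 1" using assms(1,2) by (elim evenE oddE)
  with assms(3,4) show ?thesis by simp
qed

lemma mirror_inj: "inj_on (mirror n) {..<n}"
proof (rule inj_onI)
  fix i j assume "i \<in> {..<n}" "j \<in> {..<n}" and eq: "mirror n i = mirror n j"
  then have ij: "i < n" "j < n" by auto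
  show "i = j"
  proof (cases "even i"; cases "even j")
    assume "even i" "even j"
    then show ?thesis using eq ij unfolding mirror_def by (metis dvd_mult_div_cancel)
  next
    assume "even i" "odd j"
    then show ?thesis using eq ij mirror_even_odd_distinct[of i j n] unfolding mirror_def by simp
  next
    assume "odd i" "even j"
    then show ?thesis using eq ij mirror_even_odd_distinct[of j i n] unfolding mirror_def by simp
  next
    assume "odd i" "odd j"
    moreover have "i div 2 = j div 2" using eq ij \<open>odd i\<close> \<open>odd j\<close> unfolding mirror_def by simp
    ultimately show ?thesis by (metis odd_two_times_div_two_succ)
  qed
qed

lemma mirror_permutes: "mirror n permutes {..<n}"
proof (rule bij_imp_permutes)
  note mirror_inj
  moreover have "mirror n ` {..<n} \<subseteq> {..<n}" unfolding mirror_def by auto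
  ultimately show "bij_betw (mirror n) {..<n} {..<n}"
    unfolding bij_betw_def using endo_inj_surj[of "{..<n}" "mirror n"] by simp
qed (simp add: mirror_def)

text \<open>\<open>bdir\<close> only rearranges the letters of a word, so it preserves all letter counts.\<close>
lemma count_list_bdir: "count_list (bdir w) a = count_list w a"
  using mset_permute_list[OF mirror_permutes] bdir_permute_list count_mset by metis

lemma length_bdir: "length (bdir w) = length w"
  by (simp add: bdir_def)

lemma nth_Lword:
  "q < 6 * m + 2 * n \<Longrightarrow>
    Lword m n ! q = (if q < 2 * m then 0 else if q < 6 * m then 1 else if q < 6 * m + n then 2 else 3)"
  by (auto simp: nth_append)

lemma nth_wpow_pair:
  assumes "p < 2 * n" shows "wpow [a, b] n ! p = (if even p then a else b)"
proof -
  have "wpow [a, b] n ! p = [a, b] ! (p mod 2)"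
    using nth_wpow[of p n "[a, b]"] assms by (simp add: mult.commute numeral_2_eq_2)
  also have "\<dots> = (if even p then a else b)"
    by (cases "even p") (simp_all add: odd_iff_mod_2_eq_one even_iff_mod_2_eq_zero)
  finally show ?thesis .
qed

lemma nth_Rword:
  "p < 18 * m \<Longrightarrow> Rword (2 * m) (4 * m) (3 * m) ! p =
    (if p < 4 * m then if even p then 0 else 3 else if p < 12 * m then if even p then 1 else 3 else 2)"
  by (auto simp: nth_append nth_wpow_pair length_wpow)

text \<open>The interleaving of \<open>0\<^sup>2\<^sup>m1\<^sup>4\<^sup>m2\<^sup>6\<^sup>m3\<^sup>6\<^sup>m\<close>: the even positions read the
  first half \<open>0\<^sup>2\<^sup>m1\<^sup>4\<^sup>m2\<^sup>3\<^sup>m\<close> forwards, the odd positions read the second half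
  \<open>2\<^sup>3\<^sup>m3\<^sup>6\<^sup>m\<close> backwards.\<close>
lemma bdir_Lword_diagonal: "bdir (Lword m (6 * m)) = Rword (2 * m) (4 * m) (3 * m)"
proof (rule nth_equalityI)
  show "length (bdir (Lword m (6 * m))) = length (Rword (2 * m) (4 * m) (3 * m))"
    by (simp add: length_bdir length_wpow)
next
  fix p assume "p < length (bdir (Lword m (6 * m)))"
  then have p: "p < 18 * m" by (simp add: length_bdir)
  have "bdir (Lword m (6 * m)) ! p =
      (if even p then Lword m (6 * m) ! (p div 2) else Lword m (6 * m) ! (18 * m - 1 - p div 2))"
    using p by (simp add: bdir_def)
  also have "\<dots> = (if p < 4 * m then if even p then 0 else 3
      else if p < 12 * m then if even p then 1 else 3 else 2)"
  proof -
    have "p div 2 < 9 * m" "18 * m - 1 - p div 2 < 18 * m" using p by auto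
    with p show ?thesis
      using nth_Lword[of "p div 2" m "6 * m"] nth_Lword[of "18 * m - 1 - p div 2" m "6 * m"]
      by (auto split: if_splits)
  qed
  also have "\<dots> = Rword (2 * m) (4 * m) (3 * m) ! p" using nth_Rword[OF p] by simp
  finally show "bdir (Lword m (6 * m)) ! p = Rword (2 * m) (4 * m) (3 * m) ! p" .
qed

text \<open>Counting letters shows that \<open>bdir(L)\<close> meets \<open>(03)\<^sup>+(13)\<^sup>+(22)\<^sup>+\<close> only in the
  images of the words \<open>0\<^sup>2\<^sup>m1\<^sup>4\<^sup>m2\<^sup>6\<^sup>m3\<^sup>6\<^sup>m\<close>.\<close>
lemma bdir_exampleL_inter:
  "bdir ` exampleL \<inter> {Rword i j k | i j k. i \<ge> 1 \<and> j \<ge> 1 \<and> k \<ge> 1}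
    = {Rword (2 * m) (4 * m) (3 * m) | m. m \<ge> 1}"
proof (intro set_eqI iffI)
  fix z assume "z \<in> bdir ` exampleL \<inter> {Rword i j k | i j k. i \<ge> 1 \<and> j \<ge> 1 \<and> k \<ge> 1}"
  then obtain m n i j k where z: "z = bdir (Lword m n)" "z = Rword i j k" "m \<ge> 1"
    unfolding exampleL_def by blast
  have "count_list (Rword i j k) a = count_list (Lword m n) a" for a
    using z count_list_bdir by metis
  from this[of 0] this[of 1] this[of 2] this[of 3] have "i = 2 * m" "j = 4 * m" "k = 3 * m"
    by (simp_all add: count_list_wpow count_list_replicate)
  with z show "z \<in> {Rword (2 * m) (4 * m) (3 * m) | m. m \<ge> 1}" by blast
next
  fix z assume "z \<in> {Rword (2 * m) (4 * m) (3 * m) | m. m \<ge> 1}"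
  then obtain m where "z = bdir (Lword m (6 * m))" "m \<ge> 1" using bdir_Lword_diagonal by auto
  then show "z \<in> bdir ` exampleL \<inter> {Rword i j k | i j k. i \<ge> 1 \<and> j \<ge> 1 \<and> k \<ge> 1}"
    using bdir_Lword_diagonal unfolding exampleL_def by fastforce
qed

section \<open>A counting automaton\<close>

text \<open>Starting and
  ending in \<open>Balanced\<close>, it accepts all words of \<open>(03)\<^sup>*(13)\<^sup>*(22)\<^sup>*\<close>.\<close>
datatype balance = Balanced | Pending | Dead

lemma UNIV_balance: "(UNIV :: balance set) = {Balanced, Pending, Dead}"
  using balance.exhaust by auto

instance balance :: finite
  by standard (simp add: UNIV_balance)

fun balance_step :: "balance \<Rightarrow> nat \<Rightarrow> balance" where
  "balance_step Balanced a = (if a = 0 \<or> a = 1 then Pending else if a = 2 then Balanced else Dead)"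
| "balance_step Pending a = (if a = 3 then Balanced else Dead)"
| "balance_step Dead a = Dead"

lemma foldl_balance_step_Dead: "foldl balance_step Dead w = Dead"
  by (induction w) auto

lemma balance_invariant:
  "foldl balance_step s w \<noteq> Dead \<Longrightarrow>
    count_list w 0 + count_list w 1 + of_bool (s = Pending)
      = count_list w 3 + of_bool (foldl balance_step s w = Pending)"
proof (induction w arbitrary: s)
  case (Cons a w)
  then have "foldl balance_step (balance_step s a) w \<noteq> Dead" by simp
  moreover have "balance_step s a \<noteq> Dead" using calculation foldl_balance_step_Dead by metis
  ultimately show ?case using Cons.IH[of "balance_step s a"] by (cases s) (auto split: if_splits)
qed simp

lemma balanced_counts:
  "foldl balance_step Balanced w = Balanced \<Longrightarrow> count_list w 0 + count_list w 1 = count_list w 3"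
  using balance_invariant[of Balanced w] by simp

lemma Rword_balanced: "foldl balance_step Balanced (Rword i j k) = Balanced"
  by (simp add: foldl_wpow)

section \<open>\<open>bdir(L)\<close> is not context-free\<close>

text \<open>In the diagonal word \<open>(03)\<^sup>2\<^sup>m(13)\<^sup>4\<^sup>m(22)\<^sup>3\<^sup>m\<close> every \<open>0\<close> precedes position \<open>4m\<close> and every
  \<open>2\<close> follows position \<open>12m\<close>, so a factor containing both is long.\<close>
lemma Rword_factor_long:
  assumes "Rword (2 * m) (4 * m) (3 * m) = u @ f @ w" "0 \<in> set f" "2 \<in> set f"
  shows "8 * m < length f"
proof -
  let ?z = "Rword (2 * m) (4 * m) (3 * m)"
  obtain i j where ij: "i < length f" "f ! i = 0" "j < length f" "f ! j = 2"
    using assms(2,3) by (metis in_set_conv_nth)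
  have len: "length ?z = 18 * m" by (simp add: length_wpow)
  have "?z ! (length u + i) = 0" "?z ! (length u + j) = 2"
    using assms(1) ij by (simp_all add: nth_append)
  moreover have "length u + length f \<le> 18 * m"
    using arg_cong[OF assms(1), of length] len by simp
  then have "length u + i < 18 * m" "length u + j < 18 * m" using ij by linarith+
  ultimately have "length u + i < 4 * m" "12 * m \<le> length u + j"
    using nth_Rword[of "length u + i" m] nth_Rword[of "length u + j" m] by (auto split: if_splits)
  with ij show ?thesis by linarith
qed

text \<open>Deleting a nonempty pair of factors from the diagonal word so that the result stays in
  \<open>bdir(L)\<close> and remains accepted must delete some \<open>0\<close> and some \<open>2\<close>: acceptance forces
  the image of a word \<open>0\<^sup>2\<^sup>m\<^sup>'1\<^sup>4\<^sup>m\<^sup>'2\<^sup>6\<^sup>m\<^sup>'3\<^sup>6\<^sup>m\<^sup>'\<close> with \<open>m' < m\<close>.\<close>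
lemma pumped_diagonal_deletes_0_and_2:
  assumes z: "u @ v @ x @ y @ w = Rword (2 * m) (4 * m) (3 * m)" "v @ y \<noteq> []"
    and in_bdir: "u @ x @ w \<in> bdir ` exampleL"
    and accepted: "foldl balance_step Balanced (u @ x @ w) = Balanced"
  shows "0 \<in> set (v @ y)" "2 \<in> set (v @ y)"
proof -
  obtain m' n' where w': "u @ x @ w = bdir (Lword m' n')" using in_bdir unfolding exampleL_def by blast
  have counts: "count_list (u @ x @ w) a = count_list (Lword m' n') a" for a
    using w' count_list_bdir by metis
  have "2 * m' + 4 * m' = n'"
    using balanced_counts[OF accepted] counts[of 0] counts[of 1] counts[of 3]
    by (simp add: count_list_replicate)
  moreover have "length (u @ x @ w) + length (v @ y) = 18 * m"
    using arg_cong[OF z(1), of length] by (simp add: length_wpow)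
  moreover have "length (u @ x @ w) = 6 * m' + 2 * n'"
    using arg_cong[OF w', of length] by (simp add: length_bdir)
  moreover have "0 < length (v @ y)" using z(2) by simp
  ultimately have "m' < m" by linarith
  have split: "count_list (u @ x @ w) a + count_list (v @ y) a
      = count_list (Rword (2 * m) (4 * m) (3 * m)) a" for a
    using arg_cong[OF z(1), of "\<lambda>z. count_list z a"] by simp
  have "count_list (v @ y) 0 + 2 * m' = 2 * m"
    using split[of 0] counts[of 0] by (simp add: count_list_replicate count_list_wpow)
  moreover have "count_list (v @ y) 2 + 6 * m' = 6 * m"
    using split[of 2] counts[of 2] \<open>2 * m' + 4 * m' = n'\<close>
    by (simp add: count_list_replicate count_list_wpow)
  ultimately have "count_list (v @ y) 0 \<noteq> 0" "count_list (v @ y) 2 \<noteq> 0"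
    using \<open>m' < m\<close> by linarith+
  then show "0 \<in> set (v @ y)" "2 \<in> set (v @ y)" by (simp_all only: count_list_0_iff not_not)
qed

text \<open>Pumping the diagonal word for a large \<open>m\<close> would delete a \<open>0\<close> and a \<open>2\<close> within a
  window shorter than the distance between them.\<close>
theorem not_CFL_bdir_exampleL: "\<not> CFL (bdir ` exampleL)"
proof
  assume "CFL (bdir ` exampleL)"
  then obtain P :: "(nat \<times> (nat, nat) sym list) set" and S where P: "finite P" "bdir ` exampleL = Lang P S"
    unfolding CFL_def by blast
  obtain K where K: "\<And>z. z \<in> Lang P S \<Longrightarrow> foldl balance_step Balanced z = Balanced \<Longrightarrow> K \<le> length z \<Longrightarrow>
      \<exists>u v x y w. z = u @ v @ x @ y @ w \<and> v @ y \<noteq> [] \<and> length (v @ x @ y) \<le> K \<and>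
        u @ x @ w \<in> Lang P S \<and> foldl balance_step Balanced (u @ x @ w) = Balanced"
    using pumping_with_automaton[OF P(1), of S balance_step Balanced Balanced] by blast
  define m where "m = Suc K"
  let ?z = "Rword (2 * m) (4 * m) (3 * m)"
  have "?z \<in> Lang P S"
    unfolding P(2)[symmetric] exampleL_def bdir_Lword_diagonal[symmetric] m_def by force
  moreover have "K \<le> length ?z" by (simp add: length_wpow m_def)
  ultimately obtain u v x y w where pump: "?z = u @ v @ x @ y @ w" "v @ y \<noteq> []" "length (v @ x @ y) \<le> K"
      "u @ x @ w \<in> bdir ` exampleL" "foldl balance_step Balanced (u @ x @ w) = Balanced"
    using K Rword_balanced P(2) by metis
  then have "0 \<in> set (v @ x @ y)" "2 \<in> set (v @ x @ y)"
    using pumped_diagonal_deletes_0_and_2[OF pump(1)[symmetric] pump(2,4,5)] by auto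
  then have "8 * m < length (v @ x @ y)" using Rword_factor_long[of m u "v @ x @ y" w] pump(1) by simp
  then show False using pump(3) m_def by simp
qed

theorem mainTheorem16:
  fixes L :: "nat list set"
  defines "L \<equiv> {replicate (2*m) 0 @ replicate (4*m) 1 @ replicate n 2 @ replicate n 3 | m n. m \<ge> 1 \<and> n \<ge> 1}"
  shows "CFL L
    \<and> bdir ` L \<inter> {wpow [0,3] i @ wpow [1,3] j @ wpow [2,2] k | i j k. i \<ge> 1 \<and> j \<ge> 1 \<and> k \<ge> 1}
        = {wpow [0,3] (2*m) @ wpow [1,3] (4*m) @ wpow [2,2] (3*m) | m. m \<ge> 1}
    \<and> \<not> CFL (bdir ` L)
    \<and> \<not> (\<forall>K :: nat list set. CFL K \<longrightarrow> CFL (bdir ` K))"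
proof -
  have L: "L = exampleL" unfolding L_def exampleL_def ..
  show ?thesis
    unfolding L using CFL_exampleL bdir_exampleL_inter not_CFL_bdir_exampleL by blast
qed

end
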